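(* For every integer $n\ge 1$, the restriction to $\mathfrak{sl}(n+1)$ of the functional $$F_n=\sum_{i=1}^{n}\sum_{j=1}^{n+1-i}e_{i,j}^*$$ (a sum of coordinate functionals on $(n+1)\times(n+1)$ matrices, all strictly above the antidiagonal) is regular on $A_n=\mathfrak{sl}(n+1)$, i.e. the kernel of its Kirillov form on $\mathfrak{sl}(n+1)$ has dimension $n$.
   Context: Over $\mathbb{C}$. $e_{i,j}^*(X)=X_{i,j}$. For a Lie algebra $\mathfrak{g}$ and $f\in\mathfrak{g}^*$, $B_f(x,y)=f([x,y])$, $\ker(B_f)=\{x\in\mathfrak{g}: f([x,y])=0\ \forall y\in\mathfrak{g}\}$, and $f$ is regular if $\dim\ker(B_f)=\operatorname{ind}\mathfrak{g}:=\min_{g\in\mathfrak{g}^*}\dim\ker(B_g)$. It is known that $\operatorname{ind}\mathfrak{sl}(n+1)=n$. *)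

theory Defs
  imports Complex_Main "HOL-Library.Function_Algebras"
begin

text \<open>Square matrices of size m (indices 1..m) over the complex numbers are represented
  as functions nat => nat => complex vanishing outside {1..m} x {1..m}.
  Entry (i,j) of X is X i j, so the coordinate functional e_{i,j}^* is (\<lambda>X. X i j).\<close>

type_synonym cmat = "nat \<Rightarrow> nat \<Rightarrow> complex"

definition mscale :: "complex \<Rightarrow> cmat \<Rightarrow> cmat" where
  "mscale c X = (\<lambda>i j. c * X i j)"

definition mat_space :: "nat \<Rightarrow> cmat set" where
  "mat_space m = {X. \<forall>i j. (i \<notin> {1..m} \<or> j \<notin> {1..m}) \<longrightarrow> X i j = 0}"

definition mmult :: "nat \<Rightarrow> cmat \<Rightarrow> cmat \<Rightarrow> cmat" where
  "mmult m X Y = (\<lambda>i j. \<Sum>k=1..m. X i k * Y k j)"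

definition mbracket :: "nat \<Rightarrow> cmat \<Rightarrow> cmat \<Rightarrow> cmat" where
  "mbracket m X Y = mmult m X Y - mmult m Y X"

definition mtrace :: "nat \<Rightarrow> cmat \<Rightarrow> complex" where
  "mtrace m X = (\<Sum>i=1..m. X i i)"

definition sl :: "nat \<Rightarrow> cmat set" where
  "sl m = {X \<in> mat_space m. mtrace m X = 0}"

definition kirillov_ker :: "nat \<Rightarrow> (cmat \<Rightarrow> complex) \<Rightarrow> cmat set" where
  "kirillov_ker m f = {X \<in> sl m. \<forall>Y \<in> sl m. f (mbracket m X Y) = 0}"

definition cdim :: "cmat set \<Rightarrow> nat" where
  "cdim V = vector_space.dim mscale V"

definition F :: "nat \<Rightarrow> cmat \<Rightarrow> complex" where
  "F n X = (\<Sum>i=1..n. \<Sum>j=1..n+1-i. X i j)"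

end

theory Submission
  imports Defs
begin

text \<open>With the staircase 0/1 matrix M whose entries (i,j) with i + j \<le> n + 1 equal 1, the functional
  is F_n(Z) = tr(M Z), so its Kirillov form is B(X,Y) = tr([M,X] Y). Since [M,X] is traceless and
  the trace form pairs sl(n+1) nondegenerately against traceless matrices, the kernel is the
  centralizer of M in sl(n+1).

  M is an invertible n \<times> n block N^-1 bordered by a zero row and column, where N has 1 on the
  antidiagonal and -1 just below it. A matrix commuting with M has zero border except for the
  corner, and its block commutes with N and hence with the tridiagonal matrix T = N^2. Commuting
  with T, the block is determined by its first column, while the first column of T^k has its last
  nonzero entry (-1)^k in row k + 1. Hence the matrices T^k, k < n, corrected in the corner to
  become traceless, form a basis of the centralizer, which therefore has dimension n.\<close>

interpretation cmat: vector_space mscale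
  by unfold_locales (auto simp: mscale_def algebra_simps intro!: ext)

lemma mmult_assoc: "mmult m (mmult m A B) C = mmult m A (mmult m B C)"
  unfolding mmult_def
  by (intro ext) (simp add: sum_distrib_left sum_distrib_right mult.assoc, rule sum.swap)

lemma mmult_add_left: "mmult m (A + B) C = mmult m A C + mmult m B C"
  unfolding mmult_def by (auto intro!: ext simp: algebra_simps sum.distrib)

lemma mmult_add_right: "mmult m A (B + C) = mmult m A B + mmult m A C"
  unfolding mmult_def by (auto intro!: ext simp: algebra_simps sum.distrib)

lemma mmult_diff_left: "mmult m (A - B) C = mmult m A C - mmult m B C"
  unfolding mmult_def by (auto intro!: ext simp: algebra_simps sum_subtractf)

lemma mmult_diff_right: "mmult m A (B - C) = mmult m A B - mmult m A C"
  unfolding mmult_def by (auto intro!: ext simp: algebra_simps sum_subtractf)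

lemma mmult_scale_left: "mmult m (mscale c A) B = mscale c (mmult m A B)"
  unfolding mmult_def mscale_def by (auto intro!: ext simp: algebra_simps sum_distrib_left)

lemma mmult_scale_right: "mmult m A (mscale c B) = mscale c (mmult m A B)"
  unfolding mmult_def mscale_def by (auto intro!: ext simp: algebra_simps sum_distrib_left)

lemma mmult_zero_left [simp]: "mmult m 0 A = 0"
  unfolding mmult_def by (intro ext) simp

lemma mmult_zero_right [simp]: "mmult m A 0 = 0"
  unfolding mmult_def by (intro ext) simp

lemma mtrace_add: "mtrace m (A + B) = mtrace m A + mtrace m B"
  unfolding mtrace_def by (simp add: sum.distrib)

lemma mtrace_diff: "mtrace m (A - B) = mtrace m A - mtrace m B"
  unfolding mtrace_def by (simp add: sum_subtractf)

lemma mtrace_scale: "mtrace m (mscale c A) = c * mtrace m A"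
  unfolding mtrace_def mscale_def by (simp add: sum_distrib_left)

lemma mtrace_zero [simp]: "mtrace m 0 = 0"
  unfolding mtrace_def by simp

lemma mtrace_mmult_commute: "mtrace m (mmult m A B) = mtrace m (mmult m B A)"
  unfolding mtrace_def mmult_def by (subst sum.swap) (simp add: mult.commute)

lemma mat_space_add: "A \<in> mat_space m \<Longrightarrow> B \<in> mat_space m \<Longrightarrow> A + B \<in> mat_space m"
  unfolding mat_space_def by auto

lemma mat_space_diff: "A \<in> mat_space m \<Longrightarrow> B \<in> mat_space m \<Longrightarrow> A - B \<in> mat_space m"
  unfolding mat_space_def by auto

lemma mat_space_scale: "A \<in> mat_space m \<Longrightarrow> mscale c A \<in> mat_space m"
  unfolding mat_space_def mscale_def by auto

lemma mat_space_mmult: "A \<in> mat_space m \<Longrightarrow> B \<in> mat_space m \<Longrightarrow> mmult m A B \<in> mat_space m"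
  unfolding mat_space_def mmult_def by auto

lemma mat_space_outside: "X \<in> mat_space m \<Longrightarrow> \<not> (i \<in> {1..m} \<and> j \<in> {1..m}) \<Longrightarrow> X i j = 0"
  unfolding mat_space_def by blast

lemma sum_delta_diff:
  "finite S \<Longrightarrow> (\<Sum>k\<in>S. (if k = a then f k else 0) - (if k = b \<and> P then f k else 0))
     = (if a \<in> S then f a else 0) - (if b \<in> S \<and> P then f b else (0::'a::ab_group_add))"
  by (cases P) (simp_all add: sum_subtractf sum.delta)

definition mat_unit :: "nat \<Rightarrow> nat \<Rightarrow> cmat" where
  "mat_unit a b = (\<lambda>i j. if i = a \<and> j = b then 1 else 0)"

lemma mmult_mat_unit: "a \<in> {1..m} \<Longrightarrow> mmult m A (mat_unit a b) i j = (if j = b then A i a else 0)"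
  unfolding mmult_def mat_unit_def by (simp add: if_distrib[of "\<lambda>x. _ * x"] sum.delta cong: if_cong)

lemma mat_unit_mmult: "b \<in> {1..m} \<Longrightarrow> mmult m (mat_unit a b) A i j = (if i = a then A b j else 0)"
  unfolding mmult_def mat_unit_def by (simp add: if_distrib[of "\<lambda>x. x * _"] sum.delta cong: if_cong)

lemma mat_unit_mat_space: "a \<in> {1..m} \<Longrightarrow> b \<in> {1..m} \<Longrightarrow> mat_unit a b \<in> mat_space m"
  unfolding mat_space_def mat_unit_def by auto

lemma mtrace_mat_unit: "mtrace m (mat_unit a b) = (if a = b \<and> a \<in> {1..m} then 1 else 0)"
proof -
  have "mtrace m (mat_unit a b) = (\<Sum>i\<in>{1..m}. if i = a then (if a = b then 1 else 0) else 0)"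
    unfolding mtrace_def mat_unit_def by (intro sum.cong) auto
  then show ?thesis by (simp add: sum.delta)
qed

lemma mtrace_mmult_mat_unit: "a \<in> {1..m} \<Longrightarrow> b \<in> {1..m} \<Longrightarrow> mtrace m (mmult m C (mat_unit a b)) = C b a"
  unfolding mtrace_def by (simp add: mmult_mat_unit sum.delta)

section \<open>Kirillov kernels of trace functionals\<close>

lemma mtrace_mbracket: "mtrace m (mbracket m X Y) = 0"
  unfolding mbracket_def by (simp add: mtrace_diff mtrace_mmult_commute[of m X])

lemma mtrace_mmult_mbracket:
  "mtrace m (mmult m A (mbracket m X Y)) = mtrace m (mmult m (mbracket m A X) Y)"
proof -
  have "mtrace m (mmult m A (mmult m Y X)) = mtrace m (mmult m (mmult m X A) Y)"
    by (metis mmult_assoc mtrace_mmult_commute)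
  then show ?thesis
    unfolding mbracket_def by (simp add: mmult_diff_left mmult_diff_right mtrace_diff mmult_assoc)
qed

lemma sl_trace_form_nondegenerate:
  assumes C: "C \<in> mat_space m" "mtrace m C = 0"
    and orth: "\<And>Y. Y \<in> sl m \<Longrightarrow> mtrace m (mmult m C Y) = 0"
  shows "C = 0"
proof -
  have off_diag: "C i j = 0" if "i \<in> {1..m}" "j \<in> {1..m}" "i \<noteq> j" for i j
  proof -
    have "mat_unit j i \<in> sl m"
      using that by (simp add: sl_def mat_unit_mat_space mtrace_mat_unit)
    then show ?thesis using orth mtrace_mmult_mat_unit that by metis
  qed
  have diag: "C i i = C m m" if "i \<in> {1..m}" for i
  proof -
    have m: "m \<in> {1..m}" using that by auto
    have "mat_unit i i - mat_unit m m \<in> sl m"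
      using that m by (simp add: sl_def mat_unit_mat_space mat_space_diff mtrace_diff mtrace_mat_unit)
    from orth[OF this]
    have "mtrace m (mmult m C (mat_unit i i)) - mtrace m (mmult m C (mat_unit m m)) = 0"
      by (simp add: mmult_diff_right mtrace_diff)
    then show ?thesis using that m by (simp add: mtrace_mmult_mat_unit)
  qed
  have "C m m = 0" if "1 \<le> m"
  proof -
    have "mtrace m C = (\<Sum>i\<in>{1..m}. C m m)"
      unfolding mtrace_def by (rule sum.cong[OF refl diag])
    then show ?thesis using C(2) that by simp
  qed
  then have on_diag: "C i i = 0" if "i \<in> {1..m}" for i
    using diag[OF that] that by simp
  show ?thesis
  proof (intro ext)
    fix i j
    show "C i j = 0 i j"
      using mat_space_outside[OF C(1)] off_diag on_diag
      by (cases "i \<in> {1..m} \<and> j \<in> {1..m}"; cases "i = j") auto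
  qed
qed

definition sl_centralizer :: "nat \<Rightarrow> cmat \<Rightarrow> cmat set" where
  "sl_centralizer m A = {X \<in> sl m. mmult m A X = mmult m X A}"

lemma subspace_sl_centralizer: "cmat.subspace (sl_centralizer m A)"
  unfolding cmat.subspace_def sl_centralizer_def sl_def
  by (simp add: mmult_add_left mmult_add_right mtrace_add mmult_scale_left mmult_scale_right
      mat_space_add mat_space_scale mtrace_scale) (simp add: mat_space_def)

lemma kirillov_ker_trace_form:
  assumes "A \<in> mat_space m"
  shows "kirillov_ker m (\<lambda>Z. mtrace m (mmult m A Z)) = sl_centralizer m A"
proof (intro set_eqI iffI)
  fix X assume "X \<in> sl_centralizer m A"
  then have "X \<in> sl m" "mbracket m A X = 0"
    unfolding sl_centralizer_def mbracket_def by simp_all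
  then show "X \<in> kirillov_ker m (\<lambda>Z. mtrace m (mmult m A Z))"
    unfolding kirillov_ker_def by (simp add: mtrace_mmult_mbracket)
next
  fix X assume X: "X \<in> kirillov_ker m (\<lambda>Z. mtrace m (mmult m A Z))"
  then have "X \<in> sl m" unfolding kirillov_ker_def by simp
  then have "mbracket m A X \<in> mat_space m"
    using assms by (simp add: sl_def mbracket_def mat_space_diff mat_space_mmult)
  moreover have "\<And>Y. Y \<in> sl m \<Longrightarrow> mtrace m (mmult m (mbracket m A X) Y) = 0"
    using X unfolding kirillov_ker_def by (simp add: mtrace_mmult_mbracket)
  ultimately have "mbracket m A X = 0"
    by (intro sl_trace_form_nondegenerate) (auto simp: mtrace_mbracket)
  then show "X \<in> sl_centralizer m A"
    using \<open>X \<in> sl m\<close> unfolding sl_centralizer_def mbracket_def by simp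
qed

definition F_matrix :: "nat \<Rightarrow> cmat" where
  "F_matrix n = (\<lambda>i j. if 1 \<le> i \<and> 1 \<le> j \<and> i + j \<le> n + 1 then 1 else 0)"

definition F_inv :: "nat \<Rightarrow> cmat" where
  "F_inv n = (\<lambda>i j. if 1 \<le> i \<and> i \<le> n \<and> 1 \<le> j \<and> j \<le> n then
     (if i + j = n + 1 then 1 else if i + j = n + 2 then -1 else 0) else 0)"

definition block_id :: "nat \<Rightarrow> cmat" where
  "block_id n = (\<lambda>i j. if i = j \<and> 1 \<le> i \<and> i \<le> n then 1 else 0)"

lemma F_inv_mmult: "mmult (Suc n) (F_inv n) Y i j =
   (if 1 \<le> i \<and> i \<le> n then Y (n+1-i) j - (if 2 \<le> i then Y (n+2-i) j else 0) else 0)"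
proof (cases "1 \<le> i \<and> i \<le> n")
  case True
  have "mmult (Suc n) (F_inv n) Y i j =
      (\<Sum>k\<in>{1..Suc n}. (if k = n+1-i then Y k j else 0) - (if k = n+2-i \<and> 2 \<le> i then Y k j else 0))"
    unfolding mmult_def F_inv_def using True by (intro sum.cong) auto
  then show ?thesis using True by (simp only: sum_delta_diff[OF finite_atLeastAtMost]) auto
next
  case False
  then have "F_inv n i = 0" by (auto simp: F_inv_def)
  with False show ?thesis by (auto simp: mmult_def)
qed

lemma mmult_F_inv: "mmult (Suc n) Y (F_inv n) i j =
   (if 1 \<le> j \<and> j \<le> n then Y i (n+1-j) - (if 2 \<le> j then Y i (n+2-j) else 0) else 0)"
proof (cases "1 \<le> j \<and> j \<le> n")
  case True
  have "mmult (Suc n) Y (F_inv n) i j =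
      (\<Sum>k\<in>{1..Suc n}. (if k = n+1-j then Y i k else 0) - (if k = n+2-j \<and> 2 \<le> j then Y i k else 0))"
    unfolding mmult_def F_inv_def using True by (intro sum.cong) auto
  then show ?thesis using True by (simp only: sum_delta_diff[OF finite_atLeastAtMost]) auto
next
  case False
  then have "\<And>k. F_inv n k j = 0" by (auto simp: F_inv_def)
  with False show ?thesis by (auto simp: mmult_def)
qed

lemma block_id_mmult: "mmult (Suc n) (block_id n) X i j = (if 1 \<le> i \<and> i \<le> n then X i j else 0)"
proof (cases "1 \<le> i \<and> i \<le> n")
  case True
  then have "mmult (Suc n) (block_id n) X i j = (\<Sum>k\<in>{1..Suc n}. if k = i then X k j else 0)"
    unfolding mmult_def block_id_def by (intro sum.cong) auto
  with True show ?thesis by simp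
next
  case False
  then have "block_id n i = 0" by (auto simp: block_id_def)
  with False show ?thesis by (auto simp: mmult_def)
qed

lemma mmult_block_id: "mmult (Suc n) X (block_id n) i j = (if 1 \<le> j \<and> j \<le> n then X i j else 0)"
proof (cases "1 \<le> j \<and> j \<le> n")
  case True
  then have "mmult (Suc n) X (block_id n) i j = (\<Sum>k\<in>{1..Suc n}. if k = j then X i k else 0)"
    unfolding mmult_def block_id_def by (intro sum.cong) auto
  with True show ?thesis by simp
next
  case False
  then have "\<And>k. block_id n k j = 0" by (auto simp: block_id_def)
  with False show ?thesis by (auto simp: mmult_def)
qed

lemma F_matrix_mmult_last_row: "mmult (Suc n) (F_matrix n) X (Suc n) j = 0"
  unfolding mmult_def F_matrix_def by simp

lemma mmult_F_matrix_last_col: "mmult (Suc n) X (F_matrix n) i (Suc n) = 0"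
  unfolding mmult_def F_matrix_def by simp

lemma F_matrix_F_inv: "mmult (Suc n) (F_matrix n) (F_inv n) = block_id n"
  by (intro ext, subst mmult_F_inv) (auto simp: F_matrix_def block_id_def)

lemma F_inv_F_matrix: "mmult (Suc n) (F_inv n) (F_matrix n) = block_id n"
  by (intro ext, subst F_inv_mmult) (auto simp: F_matrix_def block_id_def)

lemma block_id_F_inv: "mmult (Suc n) (block_id n) (F_inv n) = F_inv n"
  by (intro ext, subst block_id_mmult) (auto simp: F_inv_def)

lemma F_inv_block_id: "mmult (Suc n) (F_inv n) (block_id n) = F_inv n"
  by (intro ext, subst mmult_block_id) (auto simp: F_inv_def)

lemma block_id_F_matrix: "mmult (Suc n) (block_id n) (F_matrix n) = F_matrix n"
  by (intro ext, subst block_id_mmult) (auto simp: F_matrix_def)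

lemma F_matrix_block_id: "mmult (Suc n) (F_matrix n) (block_id n) = F_matrix n"
  by (intro ext, subst mmult_block_id) (auto simp: F_matrix_def)

lemma F_matrix_mat_space: "F_matrix n \<in> mat_space (Suc n)"
  unfolding mat_space_def F_matrix_def by auto

lemma F_eq_trace: "F n X = mtrace (Suc n) (mmult (Suc n) (F_matrix n) X)"
proof -
  have row: "(\<Sum>j\<in>{1..Suc n}. F_matrix n i j * X i j) = (\<Sum>j=1..n+1-i. X i j)"
    if "i \<in> {1..Suc n}" for i
  proof -
    have "(\<Sum>j\<in>{1..Suc n}. F_matrix n i j * X i j) = (\<Sum>j\<in>{1..Suc n} \<inter> {j. j \<le> n+1-i}. X i j)"
      unfolding sum.inter_restrict[OF finite_atLeastAtMost]
      using that by (intro sum.cong) (auto simp: F_matrix_def)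
    also have "{1..Suc n} \<inter> {j. j \<le> n+1-i} = {1..n+1-i}" by auto
    finally show ?thesis .
  qed
  have "mtrace (Suc n) (mmult (Suc n) (F_matrix n) X)
      = (\<Sum>i\<in>{1..Suc n}. \<Sum>j\<in>{1..Suc n}. F_matrix n j i * X i j)"
    unfolding mtrace_def mmult_def by (rule sum.swap)
  also have "\<dots> = (\<Sum>i\<in>{1..Suc n}. \<Sum>j\<in>{1..Suc n}. F_matrix n i j * X i j)"
    by (intro sum.cong refl) (simp add: F_matrix_def add.commute conj_commute)
  also have "\<dots> = (\<Sum>i\<in>{1..Suc n}. \<Sum>j=1..n+1-i. X i j)"
    by (rule sum.cong[OF refl row])
  also have "\<dots> = F n X"
    by (simp add: F_def sum.cl_ivl_Suc)
  finally show ?thesis ..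
qed

lemma kirillov_ker_F: "kirillov_ker (Suc n) (F n) = sl_centralizer (Suc n) (F_matrix n)"
proof -
  have "F n = (\<lambda>Z. mtrace (Suc n) (mmult (Suc n) (F_matrix n) Z))"
    using F_eq_trace by blast
  then show ?thesis using kirillov_ker_trace_form[OF F_matrix_mat_space] by simp
qed

section \<open>The centralizer of the matrix of F\<close>

definition T_mat :: "nat \<Rightarrow> cmat" where
  "T_mat n = mmult (Suc n) (F_inv n) (F_inv n)"

lemma T_mat_mmult: "mmult (Suc n) (T_mat n) Y i j =
   (if 1 \<le> i \<and> i \<le> n then (if 2 \<le> i then 2 else 1) * Y i j
      - (if i < n then Y (Suc i) j else 0) - (if 2 \<le> i then Y (i - 1) j else 0) else 0)"
proof (cases "1 \<le> i \<and> i \<le> n")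
  case True
  then have "Suc n - (Suc n - i) = i" "Suc (Suc n) - (Suc n - i) = Suc i"
    "Suc n - (Suc (Suc n) - i) = i - 1" "Suc (Suc n) - (Suc (Suc n) - i) = i"
    "Suc n - i \<le> n" "2 \<le> Suc n - i \<longleftrightarrow> i < n" "Suc (Suc n) - i \<le> n \<longleftrightarrow> 2 \<le> i"
    by auto
  with True show ?thesis
    unfolding T_mat_def mmult_assoc by (auto simp: F_inv_mmult)
qed (auto simp: T_mat_def mmult_assoc F_inv_mmult)

lemma mmult_T_mat: "mmult (Suc n) Y (T_mat n) i j =
   (if 1 \<le> j \<and> j \<le> n then (if 2 \<le> j then 2 else 1) * Y i j
      - (if j < n then Y i (Suc j) else 0) - (if 2 \<le> j then Y i (j - 1) else 0) else 0)"
proof (cases "1 \<le> j \<and> j \<le> n")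
  case True
  then have "Suc n - (Suc n - j) = j" "Suc (Suc n) - (Suc n - j) = Suc j"
    "Suc n - (Suc (Suc n) - j) = j - 1" "Suc (Suc n) - (Suc (Suc n) - j) = j"
    "Suc n - j \<le> n" "2 \<le> Suc n - j \<longleftrightarrow> j < n" "Suc (Suc n) - j \<le> n \<longleftrightarrow> 2 \<le> j"
    by auto
  with True show ?thesis
    unfolding T_mat_def mmult_assoc[symmetric] by (auto simp: mmult_F_inv)
qed (auto simp: T_mat_def mmult_assoc[symmetric] mmult_F_inv)

lemma T_mat_commute_first_col_zero:
  assumes commute: "mmult (Suc n) (T_mat n) Y = mmult (Suc n) Y (T_mat n)"
    and first_col: "\<And>i. 1 \<le> i \<Longrightarrow> i \<le> n \<Longrightarrow> Y i 1 = 0"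
    and "1 \<le> i" "i \<le> n" "1 \<le> j" "j \<le> n"
  shows "Y i j = 0"
  using assms(3-6)
proof (induction j arbitrary: i rule: less_induct)
  case (less j)
  show ?case
  proof (cases "j = 1")
    case True
    with less.prems first_col show ?thesis by simp
  next
    case False
    with less.prems obtain k where j: "j = Suc k" "1 \<le> k" by (cases j) auto
    have col_k: "Y i' k = 0" if "1 \<le> i'" "i' \<le> n" for i'
      using less.IH that j less.prems by auto
    have col_pred_k: "Y i' (k - 1) = 0" if "2 \<le> k" "1 \<le> i'" "i' \<le> n" for i'
      using less.IH that j less.prems by auto
    have "mmult (Suc n) (T_mat n) Y i k = 0"
      using col_k less.prems j by (simp add: T_mat_mmult)
    moreover have "mmult (Suc n) Y (T_mat n) i k = - Y i j"
      using col_k col_pred_k less.prems j by (simp add: mmult_T_mat)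
    ultimately show ?thesis using commute by simp
  qed
qed

lemma F_commuting_last_row_zero:
  assumes commute: "mmult (Suc n) (F_matrix n) X = mmult (Suc n) X (F_matrix n)"
    and "1 \<le> k" "k \<le> n"
  shows "X (Suc n) k = 0"
proof -
  have "X (Suc n) k = mmult (Suc n) X (block_id n) (Suc n) k"
    using assms(2,3) by (simp add: mmult_block_id)
  also have "mmult (Suc n) X (block_id n) = mmult (Suc n) (mmult (Suc n) (F_matrix n) X) (F_inv n)"
    by (simp add: F_matrix_F_inv[symmetric] mmult_assoc commute)
  also have "\<dots> (Suc n) k = 0"
    by (simp add: mmult_F_inv F_matrix_mmult_last_row)
  finally show ?thesis .
qed

lemma F_commuting_last_col_zero:
  assumes commute: "mmult (Suc n) (F_matrix n) X = mmult (Suc n) X (F_matrix n)"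
    and "1 \<le> k" "k \<le> n"
  shows "X k (Suc n) = 0"
proof -
  have "X k (Suc n) = mmult (Suc n) (block_id n) X k (Suc n)"
    using assms(2,3) by (simp add: block_id_mmult)
  also have "mmult (Suc n) (block_id n) X = mmult (Suc n) (F_inv n) (mmult (Suc n) X (F_matrix n))"
    by (simp add: F_inv_F_matrix[symmetric] mmult_assoc commute)
  also have "\<dots> k (Suc n) = 0"
    by (simp add: F_inv_mmult mmult_F_matrix_last_col)
  finally show ?thesis .
qed

lemma F_commuting_block_id:
  assumes "X \<in> mat_space (Suc n)"
    and commute: "mmult (Suc n) (F_matrix n) X = mmult (Suc n) X (F_matrix n)"
  shows "mmult (Suc n) (block_id n) X = mmult (Suc n) X (block_id n)"
proof (intro ext)
  fix i j
  show "mmult (Suc n) (block_id n) X i j = mmult (Suc n) X (block_id n) i j"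
    using mat_space_outside[OF assms(1), of i j]
      F_commuting_last_row_zero[OF commute, of j] F_commuting_last_col_zero[OF commute, of i]
    by (cases "i = Suc n"; cases "j = Suc n") (auto simp: block_id_mmult mmult_block_id)
qed

text \<open>X (block_id n) = M X N, so N commutes with the block: N (M X N) = (block_id n) X N.\<close>

lemma F_commuting_block_commute_T_mat:
  assumes "X \<in> mat_space (Suc n)"
    and commute: "mmult (Suc n) (F_matrix n) X = mmult (Suc n) X (F_matrix n)"
  defines "Y \<equiv> mmult (Suc n) X (block_id n)"
  shows "mmult (Suc n) (T_mat n) Y = mmult (Suc n) Y (T_mat n)"
proof -
  have "mmult (Suc n) (F_inv n) Y =
      mmult (Suc n) (F_inv n) (mmult (Suc n) (mmult (Suc n) (F_matrix n) X) (F_inv n))"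
    unfolding Y_def by (simp add: F_matrix_F_inv[symmetric] mmult_assoc commute)
  also have "\<dots> = mmult (Suc n) (mmult (Suc n) (block_id n) X) (F_inv n)"
    by (simp add: F_inv_F_matrix[symmetric] mmult_assoc)
  finally have "mmult (Suc n) (F_inv n) Y = mmult (Suc n) Y (F_inv n)"
    unfolding Y_def F_commuting_block_id[OF assms(1,2)] .
  then show ?thesis
    unfolding T_mat_def by (metis mmult_assoc)
qed

lemma sl_centralizer_F_matrix_first_col_zero:
  assumes X: "X \<in> sl_centralizer (Suc n) (F_matrix n)"
    and first_col: "\<And>i. 1 \<le> i \<Longrightarrow> i \<le> n \<Longrightarrow> X i 1 = 0"
  shows "X = 0"
proof -
  have space: "X \<in> mat_space (Suc n)" and trace: "mtrace (Suc n) X = 0"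
    and commute: "mmult (Suc n) (F_matrix n) X = mmult (Suc n) X (F_matrix n)"
    using X unfolding sl_centralizer_def sl_def by auto
  have block: "X i j = 0" if "1 \<le> i" "i \<le> n" "1 \<le> j" "j \<le> n" for i j
    using T_mat_commute_first_col_zero[OF F_commuting_block_commute_T_mat[OF space commute], of i j]
      first_col that by (simp add: mmult_block_id)
  have off_corner: "X i j = 0" if "\<not> (i = Suc n \<and> j = Suc n)" for i j
    using mat_space_outside[OF space, of i j] block[of i j] that
      F_commuting_last_row_zero[OF commute, of j] F_commuting_last_col_zero[OF commute, of i]
    by (cases "1 \<le> i \<and> i \<le> n"; cases "1 \<le> j \<and> j \<le> n") (auto simp: le_Suc_eq)
  have "X (Suc n) (Suc n) = mtrace (Suc n) X"
    unfolding mtrace_def using off_corner by (simp add: sum.cl_ivl_Suc)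
  then have "X (Suc n) (Suc n) = 0" using trace by simp
  with off_corner show "X = 0" by (intro ext) (metis zero_fun_apply)
qed

section \<open>A basis of the centralizer\<close>

primrec T_pow :: "nat \<Rightarrow> nat \<Rightarrow> cmat" where
  "T_pow n 0 = block_id n"
| "T_pow n (Suc k) = mmult (Suc n) (T_mat n) (T_pow n k)"

lemma T_pow_mat_space: "T_pow n k \<in> mat_space (Suc n)"
proof (induction k)
  case 0
  show ?case by (auto simp: mat_space_def block_id_def)
next
  case (Suc k)
  have "F_inv n \<in> mat_space (Suc n)" by (auto simp: mat_space_def F_inv_def)
  then show ?case using Suc by (simp add: T_mat_def mat_space_mmult)
qed

lemma F_matrix_commute_T_pow:
  "mmult (Suc n) (F_matrix n) (T_pow n k) = mmult (Suc n) (T_pow n k) (F_matrix n)"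
proof (induction k)
  case 0
  show ?case by (simp add: F_matrix_block_id block_id_F_matrix)
next
  case (Suc k)
  have "mmult (Suc n) (F_matrix n) (T_mat n) = F_inv n"
    unfolding T_mat_def by (simp add: mmult_assoc[symmetric] F_matrix_F_inv block_id_F_inv)
  moreover have "mmult (Suc n) (T_mat n) (F_matrix n) = F_inv n"
    unfolding T_mat_def by (simp add: mmult_assoc F_inv_F_matrix F_inv_block_id)
  ultimately have "mmult (Suc n) (F_matrix n) (T_mat n) = mmult (Suc n) (T_mat n) (F_matrix n)"
    by simp
  then show ?case using Suc by (metis T_pow.simps(2) mmult_assoc)
qed

lemma T_pow_first_col:
  assumes "k < n" "Suc k \<le> i"
  shows "T_pow n k i 1 = (if i = Suc k then (-1) ^ k else 0)"
  using assms
proof (induction k arbitrary: i)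
  case 0
  then show ?case by (simp add: block_id_def)
next
  case (Suc k)
  have IH: "T_pow n k i' 1 = (if i' = Suc k then (-1) ^ k else 0)" if "Suc k \<le> i'" for i'
    using Suc that by simp
  show ?case
  proof (cases "i \<le> n")
    case True
    then show ?thesis
      using Suc.prems IH[of i] IH[of "Suc i"] IH[of "i - 1"] by (auto simp: T_mat_mmult)
  next
    case False
    then show ?thesis using Suc.prems by (simp add: T_mat_mmult)
  qed
qed

text \<open>The corner correction makes T^k traceless without affecting commutation with the matrix
  of F, whose last row and column vanish.\<close>

definition centralizer_basis :: "nat \<Rightarrow> nat \<Rightarrow> cmat" where
  "centralizer_basis n k =
     T_pow n k - mscale (mtrace (Suc n) (T_pow n k)) (mat_unit (Suc n) (Suc n))"

lemma centralizer_basis_in_sl_centralizer: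
  "centralizer_basis n k \<in> sl_centralizer (Suc n) (F_matrix n)"
proof -
  let ?U = "mat_unit (Suc n) (Suc n)"
  have U: "?U \<in> mat_space (Suc n)" "mtrace (Suc n) ?U = 1"
    by (simp_all add: mat_unit_mat_space mtrace_mat_unit)
  have "mmult (Suc n) (F_matrix n) ?U = 0" "mmult (Suc n) ?U (F_matrix n) = 0"
    by (auto intro!: ext simp: mmult_mat_unit mat_unit_mmult F_matrix_def)
  then show ?thesis
    unfolding centralizer_basis_def sl_centralizer_def sl_def
    using T_pow_mat_space U F_matrix_commute_T_pow
    by (simp add: mat_space_diff mat_space_scale mtrace_diff mtrace_scale mmult_diff_left
        mmult_diff_right mmult_scale_left mmult_scale_right)
qed

lemma centralizer_basis_first_col:
  "k < n \<Longrightarrow> Suc k \<le> i \<Longrightarrow> centralizer_basis n k i 1 = (if i = Suc k then (-1) ^ k else 0)"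
  using T_pow_first_col[of k n i] by (simp add: centralizer_basis_def mscale_def mat_unit_def)

lemma span_centralizer_basis_first_col:
  assumes "N \<le> n" "X \<in> cmat.span (centralizer_basis n ` {..<N})" "N < i"
  shows "X i 1 = 0"
proof -
  have "cmat.subspace {X. \<forall>i>N. X i 1 = 0}"
    by (auto simp: cmat.subspace_def mscale_def)
  moreover have "centralizer_basis n k \<in> {X. \<forall>i>N. X i 1 = 0}" if "k < N" for k
    using centralizer_basis_first_col[of k n] that assms(1) by auto
  ultimately show ?thesis
    using cmat.span_minimal[of "centralizer_basis n ` {..<N}"] assms(2,3) by blast
qed

lemma independent_centralizer_basis:
  "N \<le> n \<Longrightarrow> cmat.independent (centralizer_basis n ` {..<N})
     \<and> card (centralizer_basis n ` {..<N}) = N"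
proof (induction N)
  case 0
  show ?case by (simp add: cmat.independent_empty)
next
  case (Suc N)
  let ?B = "centralizer_basis n ` {..<N}"
  have "centralizer_basis n N (Suc N) 1 \<noteq> 0"
    using Suc.prems centralizer_basis_first_col[of N n "Suc N"] by simp
  then have new: "centralizer_basis n N \<notin> cmat.span ?B"
    using span_centralizer_basis_first_col[of N n _ "Suc N"] Suc.prems by auto
  then have "centralizer_basis n N \<notin> ?B"
    by (meson cmat.span_base)
  then have "card (insert (centralizer_basis n N) ?B) = Suc N"
    using Suc.IH Suc.prems by simp
  moreover have "cmat.independent (insert (centralizer_basis n N) ?B)"
    using cmat.independent_insertI[OF new] Suc.IH Suc.prems by simp
  moreover have "centralizer_basis n ` {..<Suc N} = insert (centralizer_basis n N) ?B"
    by (simp add: lessThan_Suc)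
  ultimately show ?case by simp
qed

lemma sl_centralizer_F_matrix_span:
  assumes "k \<le> n" "X \<in> sl_centralizer (Suc n) (F_matrix n)" "\<And>i. k < i \<Longrightarrow> X i 1 = 0"
  shows "X \<in> cmat.span (centralizer_basis n ` {..<k})"
  using assms
proof (induction k arbitrary: X)
  case 0
  then have "X = 0"
    by (intro sl_centralizer_F_matrix_first_col_zero) auto
  then show ?case by (metis cmat.span_zero)
next
  case (Suc k)
  define c where "c = X (Suc k) 1 * (-1) ^ k"
  define Z where "Z = X - mscale c (centralizer_basis n k)"
  have "Z \<in> sl_centralizer (Suc n) (F_matrix n)"
    unfolding Z_def using Suc.prems(2) centralizer_basis_in_sl_centralizer subspace_sl_centralizer
    by (intro cmat.subspace_diff cmat.subspace_scale)
  moreover have "Z i 1 = 0" if "k < i" for i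
  proof (cases "i = Suc k")
    case True
    have "((-1) ^ k * (-1) ^ k :: complex) = 1" by (simp flip: power_mult_distrib)
    with True Suc.prems(1) centralizer_basis_first_col[of k n i] show ?thesis
      by (simp add: Z_def c_def mscale_def mult.assoc)
  next
    case False
    with that Suc.prems centralizer_basis_first_col[of k n i] show ?thesis
      by (simp add: Z_def mscale_def)
  qed
  ultimately have "Z \<in> cmat.span (centralizer_basis n ` {..<k})"
    using Suc.IH Suc.prems(1) by simp
  then have "Z \<in> cmat.span (centralizer_basis n ` {..<Suc k})"
    using cmat.span_mono[OF image_mono[of "{..<k}" "{..<Suc k}"]] by auto
  moreover have "mscale c (centralizer_basis n k) \<in> cmat.span (centralizer_basis n ` {..<Suc k})"
    by (intro cmat.span_scale cmat.span_base) auto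
  ultimately have "Z + mscale c (centralizer_basis n k) \<in> cmat.span (centralizer_basis n ` {..<Suc k})"
    by (rule cmat.span_add)
  then show ?case unfolding Z_def by simp
qed

lemma cdim_sl_centralizer_F_matrix:
  assumes "1 \<le> n"
  shows "cdim (sl_centralizer (Suc n) (F_matrix n)) = n"
proof -
  let ?B = "centralizer_basis n ` {..<n}"
  have "sl_centralizer (Suc n) (F_matrix n) \<subseteq> cmat.span ?B"
  proof
    fix X assume X: "X \<in> sl_centralizer (Suc n) (F_matrix n)"
    then have space: "X \<in> mat_space (Suc n)"
      and commute: "mmult (Suc n) (F_matrix n) X = mmult (Suc n) X (F_matrix n)"
      unfolding sl_centralizer_def sl_def by auto
    have "X i 1 = 0" if "n < i" for i
      using that assms F_commuting_last_row_zero[OF commute, of 1] mat_space_outside[OF space, of i 1]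
      by (cases "i = Suc n") auto
    then show "X \<in> cmat.span ?B"
      by (rule sl_centralizer_F_matrix_span[OF order_refl X])
  qed
  moreover have "?B \<subseteq> sl_centralizer (Suc n) (F_matrix n)"
    using centralizer_basis_in_sl_centralizer by blast
  ultimately show ?thesis
    unfolding cdim_def using cmat.basis_card_eq_dim[of ?B] independent_centralizer_basis[of n n]
    by simp
qed

theorem theorem4p3:
  fixes n :: nat
  assumes "n \<ge> 1"
  shows "cdim (kirillov_ker (n + 1) (F n)) = n"
  using cdim_sl_centralizer_F_matrix[OF assms] by (simp add: kirillov_ker_F)

end
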